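(* Let $N\ge1$, $1\le S\le N$, $L$ a band-width vector, $\dot W$ an $L$-admissible matrix, $W_\varepsilon=\mathrm{Id}+\varepsilon\dot W$, $k\in\mathbb Z$, and $\beta\in\mathbb R^S$ such that $e^{-2\pi ik\beta_1},\dots,e^{-2\pi ik\beta_S}$ are pairwise distinct. Put $P_{\varepsilon,\beta}=D_{k,\beta,L}W_\varepsilon$. Suppose that for every sufficiently small $\varepsilon>0$ we are given a unit-norm $f_\varepsilon\in\mathbb C^N$ and $\lambda_\varepsilon\in\mathbb C$ with $P_{\varepsilon,\beta}f_\varepsilon=\lambda_\varepsilon f_\varepsilon$ and $\lambda_\varepsilon\to e^{-2\pi ik\beta_s}$ as $\varepsilon\to0$ for some $s\in\{1,\dots,S\}$. Then every accumulation point of $\{f_\varepsilon\}$ as $\varepsilon\to0$ is an eigenvector of $\hat P_{k,\beta,L}$.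
   Context: A band-width vector is $L=(L_1,\dots,L_S)$ of positive integers with $\sum_sL_s=N$; $N_0=0$, $N_s=N_{s-1}+L_s$, $B_s=\{j:N_{s-1}<j\le N_s\}$. $D_{k,\beta,L}$ is the diagonal matrix with $j$-th entry $e^{-2\pi ik\beta_s}$ for $j\in B_s$. $\dot W$ is $L$-admissible if it is real symmetric and (1) $\dot W_{ij}\ge0$ for $i\ne j$, $\sum_j\dot W_{ij}=0$ for all $i$; (2) $\dot W$ has $N$ distinct eigenvalues; (3) each $\hat W_s=(\dot W_{jk})_{j,k\in B_s}$ has $L_s$ distinct eigenvalues. $\hat W_L$ is block diagonal with blocks $\hat W_1,\dots,\hat W_S$ and $\hat P_{k,\beta,L}=D_{k,\beta,L}\hat W_L$. *)

theory Defs
  imports Complex_Main "Jordan_Normal_Form.Char_Poly"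
begin

(* Conventions: indices are 0-based. A band-width vector is a list L of
   positive naturals; S = length L; block s (0 \<le> s < S) is
   {Nst L s ..< Nst L (Suc s)} where Nst L s = L_0 + ... + L_{s-1}. *)

definition bandwidth_vec :: "nat list \<Rightarrow> nat \<Rightarrow> bool" where
  "bandwidth_vec L N \<longleftrightarrow> (\<forall>s<length L. 0 < L ! s) \<and> sum_list L = N"

definition Nst :: "nat list \<Rightarrow> nat \<Rightarrow> nat" where
  "Nst L s = sum_list (take s L)"

definition blk :: "nat list \<Rightarrow> nat \<Rightarrow> nat" where
  "blk L j = (LEAST s. j < Nst L (Suc s))"

definition Wblock :: "nat list \<Rightarrow> 'a mat \<Rightarrow> nat \<Rightarrow> 'a mat" where
  "Wblock L W s = mat (L ! s) (L ! s) (\<lambda>(i,j). W $$ (Nst L s + i, Nst L s + j))"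

definition Wblockdiag :: "nat list \<Rightarrow> 'a::zero mat \<Rightarrow> 'a mat" where
  "Wblockdiag L W = mat (dim_row W) (dim_col W)
     (\<lambda>(i,j). if blk L i = blk L j then W $$ (i,j) else 0)"

definition admissible :: "nat list \<Rightarrow> nat \<Rightarrow> real mat \<Rightarrow> bool" where
  "admissible L N W \<longleftrightarrow>
     W \<in> carrier_mat N N \<and> transpose_mat W = W \<and>
     (\<forall>i<N. \<forall>j<N. i \<noteq> j \<longrightarrow> 0 \<le> W $$ (i,j)) \<and>
     (\<forall>i<N. (\<Sum>j<N. W $$ (i,j)) = 0) \<and>
     card {\<mu>. eigenvalue W \<mu>} = N \<and>
     (\<forall>s<length L. card {\<mu>. eigenvalue (Wblock L W s) \<mu>} = L ! s)"

definition Dmat :: "nat list \<Rightarrow> int \<Rightarrow> (nat \<Rightarrow> real) \<Rightarrow> complex mat" where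
  "Dmat L k \<beta> = mat (sum_list L) (sum_list L)
     (\<lambda>(i,j). if i = j then cis (- 2 * pi * of_int k * \<beta> (blk L i)) else 0)"

definition cmat :: "real mat \<Rightarrow> complex mat" where
  "cmat W = map_mat complex_of_real W"

definition vnorm :: "complex vec \<Rightarrow> real" where
  "vnorm v = sqrt (\<Sum>i<dim_vec v. (cmod (v $ i))^2)"

definition accum_point_at0 :: "nat \<Rightarrow> (real \<Rightarrow> complex vec) \<Rightarrow> complex vec \<Rightarrow> bool" where
  "accum_point_at0 N f g \<longleftrightarrow> g \<in> carrier_vec N \<and>
     (\<exists>e::nat \<Rightarrow> real. (\<forall>n. 0 < e n) \<and> e \<longlonglongrightarrow> 0 \<and>
        (\<forall>i<N. (\<lambda>n. f (e n) $ i) \<longlonglongrightarrow> g $ i))"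

end

theory Submission
  imports Defs
begin

text \<open>Written in coordinates, the eigen-equation for \<open>P\<^sub>\<epsilon> = D (1 + \<epsilon> W)\<close> reads
  \<open>\<epsilon> d\<^sub>i (W f\<^sub>\<epsilon>)\<^sub>i = (\<lambda>\<^sub>\<epsilon> - d\<^sub>i) (f\<^sub>\<epsilon>)\<^sub>i\<close>, where \<open>d\<^sub>i\<close> is the phase of the block of \<open>i\<close>.
  Letting \<open>\<epsilon> \<rightarrow> 0\<close> along a sequence on which \<open>f\<^sub>\<epsilon> \<rightarrow> g\<close>, the left side vanishes while
  \<open>\<lambda>\<^sub>\<epsilon> - d\<^sub>i \<rightarrow> d\<^sub>s - d\<^sub>i\<close>, which is nonzero off block \<open>s\<close>; so \<open>g\<close> is supported on block \<open>s\<close>.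
  Inside block \<open>s\<close> all coordinates share the factor \<open>\<lambda>\<^sub>\<epsilon> - d\<^sub>s\<close>, so dividing the
  equations for two indices \<open>i, i\<^sub>0\<close> eliminates \<open>\<epsilon>\<close> and \<open>\<lambda>\<^sub>\<epsilon>\<close>: in the limit
  \<open>(W g)\<^sub>i g\<^sub>i\<^sub>0 = (W g)\<^sub>i\<^sub>0 g\<^sub>i\<close>. Choosing \<open>g\<^sub>i\<^sub>0 \<noteq> 0\<close> (possible since \<open>\<parallel>g\<parallel> = 1\<close>) shows that
  \<open>g\<close> is an eigenvector of the block \<open>\<hat>W\<^sub>s\<close>, hence of \<open>\<hat>P\<close>.\<close>

definition block_phase :: "int \<Rightarrow> (nat \<Rightarrow> real) \<Rightarrow> nat \<Rightarrow> complex" where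
  "block_phase k \<beta> s = cis (- 2 * pi * of_int k * \<beta> s)"

lemma mult_mat_vec_nth_sum:
  assumes "A \<in> carrier_mat m n" "x \<in> carrier_vec n" "i < m"
  shows "(A *\<^sub>v x) $ i = (\<Sum>j<n. A $$ (i,j) * x $ j)"
  using assms by (auto simp: scalar_prod_def row_def lessThan_atLeast0)

lemma diagonal_mult_mat_vec_nth:
  assumes "diagonal_mat A" "A \<in> carrier_mat n n" "x \<in> carrier_vec n" "i < n"
  shows "(A *\<^sub>v x) $ i = A $$ (i,i) * x $ i"
proof -
  have "(A *\<^sub>v x) $ i = (\<Sum>j<n. if j = i then A $$ (i,i) * x $ i else 0)"
    unfolding mult_mat_vec_nth_sum[OF assms(2-4)]
    using assms by (intro sum.cong) (auto simp: diagonal_mat_def)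
  then show ?thesis
    using assms(4) by simp
qed

lemma diagonal_perturbed_eigen_nth:
  fixes D W :: "'a :: comm_ring_1 mat"
  assumes "diagonal_mat D" "D \<in> carrier_mat n n" "W \<in> carrier_mat n n" "x \<in> carrier_vec n" "i < n"
    and "(D * (1\<^sub>m n + \<epsilon> \<cdot>\<^sub>m W)) *\<^sub>v x = lam \<cdot>\<^sub>v x"
  shows "\<epsilon> * D $$ (i,i) * (W *\<^sub>v x) $ i = (lam - D $$ (i,i)) * x $ i"
proof -
  let ?P = "1\<^sub>m n + \<epsilon> \<cdot>\<^sub>m W"
  have P: "?P \<in> carrier_mat n n"
    using assms(3) by simp
  have "(?P *\<^sub>v x) $ i = (\<Sum>j<n. (if j = i then x $ i else 0) + \<epsilon> * (W $$ (i,j) * x $ j))"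
    unfolding mult_mat_vec_nth_sum[OF P assms(4,5)]
    using assms(3,5) by (intro sum.cong) (auto simp: algebra_simps)
  also have "\<dots> = x $ i + \<epsilon> * (W *\<^sub>v x) $ i"
    using assms(3-5) by (simp add: sum.distrib sum_distrib_left mult_mat_vec_nth_sum del: index_mult_mat_vec)
  finally have Px: "(?P *\<^sub>v x) $ i = x $ i + \<epsilon> * (W *\<^sub>v x) $ i" .
  have "lam * x $ i = ((D * ?P) *\<^sub>v x) $ i"
    using assms(4-6) by simp
  also have "\<dots> = (D *\<^sub>v (?P *\<^sub>v x)) $ i"
    using assms(2,4) P by simp
  also have "\<dots> = D $$ (i,i) * (?P *\<^sub>v x) $ i"
    using assms(1,2,4,5) P by (intro diagonal_mult_mat_vec_nth) auto
  also have "\<dots> = D $$ (i,i) * (x $ i + \<epsilon> * (W *\<^sub>v x) $ i)"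
    by (simp only: Px)
  finally show ?thesis
    by (simp add: algebra_simps)
qed

lemma Dmat_carrier: "Dmat L k \<beta> \<in> carrier_mat (sum_list L) (sum_list L)"
  by (simp add: Dmat_def)

lemma diagonal_Dmat: "diagonal_mat (Dmat L k \<beta>)"
  by (simp add: Dmat_def diagonal_mat_def)

lemma Dmat_diag: "i < sum_list L \<Longrightarrow> Dmat L k \<beta> $$ (i,i) = block_phase k \<beta> (blk L i)"
  by (simp add: Dmat_def block_phase_def)

lemma blk_less_length:
  assumes "i < sum_list L"
  shows "blk L i < length L"
proof -
  have "L \<noteq> []"
    using assms by auto
  then have "i < Nst L (Suc (length L - 1))"
    using assms by (simp add: Nst_def)
  then have "blk L i \<le> length L - 1"
    unfolding blk_def by (rule Least_le)
  with \<open>L \<noteq> []\<close> show ?thesis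
    by (cases L) auto
qed

lemma Dmat_perturbed_eigen_nth:
  assumes "sum_list L = n" "W \<in> carrier_mat n n" "x \<in> carrier_vec n" "i < n"
    and "(Dmat L k \<beta> * (1\<^sub>m n + \<epsilon> \<cdot>\<^sub>m W)) *\<^sub>v x = lam \<cdot>\<^sub>v x"
  shows "\<epsilon> * block_phase k \<beta> (blk L i) * (W *\<^sub>v x) $ i = (lam - block_phase k \<beta> (blk L i)) * x $ i"
  using diagonal_perturbed_eigen_nth[OF diagonal_Dmat, of L k \<beta> n W x i \<epsilon> lam] assms
  by (metis Dmat_carrier Dmat_diag)

lemma Wblockdiag_carrier: "W \<in> carrier_mat n n \<Longrightarrow> Wblockdiag L W \<in> carrier_mat n n"
  by (simp add: Wblockdiag_def)

lemma Wblockdiag_mult_vec_nth_if_supported: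
  assumes "W \<in> carrier_mat n n" "g \<in> carrier_vec n" "i < n"
    and supp: "\<And>j. j < n \<Longrightarrow> blk L j \<noteq> s \<Longrightarrow> g $ j = 0"
  shows "(Wblockdiag L W *\<^sub>v g) $ i = (if blk L i = s then (W *\<^sub>v g) $ i else 0)"
proof -
  have "(Wblockdiag L W *\<^sub>v g) $ i = (\<Sum>j<n. if blk L i = s then W $$ (i,j) * g $ j else 0)"
    unfolding mult_mat_vec_nth_sum[OF Wblockdiag_carrier[OF assms(1)] assms(2,3)]
    using assms by (intro sum.cong) (auto simp: Wblockdiag_def)
  then show ?thesis
    using assms by (simp add: mult_mat_vec_nth_sum del: index_mult_mat_vec)
qed

lemma eigenvector_Dmat_Wblockdiag_if_block_eigen:
  assumes L: "sum_list L = n" and W: "W \<in> carrier_mat n n"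
    and g: "g \<in> carrier_vec n" "g \<noteq> 0\<^sub>v n"
    and supp: "\<And>j. j < n \<Longrightarrow> blk L j \<noteq> s \<Longrightarrow> g $ j = 0"
    and eigen: "\<And>i. i < n \<Longrightarrow> blk L i = s \<Longrightarrow> (W *\<^sub>v g) $ i = \<mu> * g $ i"
  shows "eigenvector (Dmat L k \<beta> * Wblockdiag L W) g (block_phase k \<beta> s * \<mu>)"
proof -
  have D: "Dmat L k \<beta> \<in> carrier_mat n n"
    using Dmat_carrier L by metis
  have B: "Wblockdiag L W \<in> carrier_mat n n"
    using W by (rule Wblockdiag_carrier)
  have "(Dmat L k \<beta> * Wblockdiag L W *\<^sub>v g) $ i = (block_phase k \<beta> s * \<mu> \<cdot>\<^sub>v g) $ i"
    if i: "i < n" for i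
  proof -
    have "(Dmat L k \<beta> * Wblockdiag L W *\<^sub>v g) $ i = Dmat L k \<beta> $$ (i,i) * (Wblockdiag L W *\<^sub>v g) $ i"
      using D B g i by (simp add: diagonal_Dmat diagonal_mult_mat_vec_nth del: index_mult_mat_vec)
    then show ?thesis
      using Wblockdiag_mult_vec_nth_if_supported[OF W g(1) i supp] supp[OF i] eigen[OF i] g i L
      by (auto simp: Dmat_diag)
  qed
  then have "Dmat L k \<beta> * Wblockdiag L W *\<^sub>v g = (block_phase k \<beta> s * \<mu>) \<cdot>\<^sub>v g"
    using D B g by (intro eq_vecI) auto
  then show ?thesis
    using D g unfolding eigenvector_def by simp
qed

lemma perturbed_eigen_limit_vanishes:
  fixes x y \<epsilon> lam :: "nat \<Rightarrow> 'a :: real_normed_field"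
  assumes "x \<longlonglongrightarrow> a" "y \<longlonglongrightarrow> b" "\<epsilon> \<longlonglongrightarrow> 0" "lam \<longlonglongrightarrow> c" "c \<noteq> d"
    and "eventually (\<lambda>n. \<epsilon> n * d * y n = (lam n - d) * x n) sequentially"
  shows "a = 0"
proof -
  have "(\<lambda>n. \<epsilon> n * d * y n) \<longlonglongrightarrow> 0 * d * b"
    using assms by (intro tendsto_intros)
  then have "(\<lambda>n. (lam n - d) * x n) \<longlonglongrightarrow> 0"
    using assms(6) by (simp add: Lim_transform_eventually)
  moreover have "(\<lambda>n. (lam n - d) * x n) \<longlonglongrightarrow> (c - d) * a"
    using assms by (intro tendsto_intros)
  ultimately have "(c - d) * a = 0"
    by (rule LIMSEQ_unique[rotated])
  then show ?thesis
    using assms(5) by simp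
qed

lemma perturbed_eigen_limit_proportional:
  fixes x x' y y' \<epsilon> lam :: "nat \<Rightarrow> 'a :: real_normed_field"
  assumes "x \<longlonglongrightarrow> a" "x' \<longlonglongrightarrow> a'" "y \<longlonglongrightarrow> b" "y' \<longlonglongrightarrow> b'" "d \<noteq> 0"
    and "eventually (\<lambda>n. \<epsilon> n \<noteq> 0 \<and> \<epsilon> n * d * y n = (lam n - d) * x n
                                    \<and> \<epsilon> n * d * y' n = (lam n - d) * x' n) sequentially"
  shows "b * a' = b' * a"
proof -
  have "eventually (\<lambda>n. y n * x' n = y' n * x n) sequentially"
    using assms(6)
  proof eventually_elim
    case (elim n)
    have "(\<epsilon> n * d) * (y n * x' n) = (lam n - d) * x n * x' n"
      using elim by (simp add: mult.assoc[symmetric])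
    also have "\<dots> = (\<epsilon> n * d) * (y' n * x n)"
      using elim by (simp add: mult.assoc[symmetric] mult.commute[of _ "x n"])
    finally show ?case
      using elim assms(5) by simp
  qed
  moreover have "(\<lambda>n. y n * x' n) \<longlonglongrightarrow> b * a'"
    using assms by (intro tendsto_intros)
  ultimately have "(\<lambda>n. y' n * x n) \<longlonglongrightarrow> b * a'"
    by (rule Lim_transform_eventually[rotated])
  moreover have "(\<lambda>n. y' n * x n) \<longlonglongrightarrow> b' * a"
    using assms by (intro tendsto_intros)
  ultimately show ?thesis
    by (rule LIMSEQ_unique)
qed

lemma tendsto_mult_mat_vec_nth:
  fixes A :: "'a :: real_normed_algebra mat"
  assumes "A \<in> carrier_mat m n" "i < m" "g \<in> carrier_vec n"
    and "eventually (\<lambda>t. v t \<in> carrier_vec n) F"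
    and "\<And>j. j < n \<Longrightarrow> ((\<lambda>t. v t $ j) \<longlongrightarrow> g $ j) F"
  shows "((\<lambda>t. (A *\<^sub>v v t) $ i) \<longlongrightarrow> (A *\<^sub>v g) $ i) F"
proof -
  have "((\<lambda>t. \<Sum>j<n. A $$ (i,j) * v t $ j) \<longlongrightarrow> (A *\<^sub>v g) $ i) F"
    unfolding mult_mat_vec_nth_sum[OF assms(1,3,2)] using assms(5)
    by (intro tendsto_sum tendsto_mult_left) auto
  moreover have "eventually (\<lambda>t. (\<Sum>j<n. A $$ (i,j) * v t $ j) = (A *\<^sub>v v t) $ i) F"
    using assms(4) by eventually_elim (use assms(1,2) in \<open>simp add: mult_mat_vec_nth_sum del: index_mult_mat_vec\<close>)
  ultimately show ?thesis
    by (rule Lim_transform_eventually)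
qed

lemma tendsto_vnorm:
  assumes "g \<in> carrier_vec n" "eventually (\<lambda>t. v t \<in> carrier_vec n) F"
    and "\<And>j. j < n \<Longrightarrow> ((\<lambda>t. v t $ j) \<longlongrightarrow> g $ j) F"
  shows "((\<lambda>t. vnorm (v t)) \<longlongrightarrow> vnorm g) F"
proof -
  have "((\<lambda>t. sqrt (\<Sum>j<n. (cmod (v t $ j))\<^sup>2)) \<longlongrightarrow> vnorm g) F"
    unfolding vnorm_def using assms(1,3) by (auto intro!: tendsto_intros)
  moreover have "eventually (\<lambda>t. sqrt (\<Sum>j<n. (cmod (v t $ j))\<^sup>2) = vnorm (v t)) F"
    using assms(2) by eventually_elim (simp add: vnorm_def)
  ultimately show ?thesis
    by (rule Lim_transform_eventually)
qed

lemma limit_of_unit_vectors_nonzero: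
  assumes "g \<in> carrier_vec n" "F \<noteq> bot"
    and "eventually (\<lambda>t. v t \<in> carrier_vec n \<and> vnorm (v t) = 1) F"
    and "\<And>j. j < n \<Longrightarrow> ((\<lambda>t. v t $ j) \<longlongrightarrow> g $ j) F"
  shows "g \<noteq> 0\<^sub>v n"
proof -
  have "((\<lambda>t. vnorm (v t)) \<longlongrightarrow> vnorm g) F"
    using assms(1,3,4) by (intro tendsto_vnorm) (auto elim: eventually_mono)
  moreover have "((\<lambda>t. vnorm (v t)) \<longlongrightarrow> 1) F"
    using assms(3) by (intro Lim_transform_eventually[OF tendsto_const]) (auto elim: eventually_mono)
  ultimately have "vnorm g = 1"
    by (rule tendsto_unique[OF assms(2)])
  then show ?thesis
    by (auto simp: vnorm_def)
qed

lemma perturbed_eigenvector_limit_is_block_eigenvector: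
  fixes W :: "complex mat" and F :: "nat \<Rightarrow> complex vec" and \<epsilon> lam :: "nat \<Rightarrow> complex"
  assumes L: "sum_list L = n" and W: "W \<in> carrier_mat n n"
    and phases: "\<And>t. t < length L \<Longrightarrow> t \<noteq> s \<Longrightarrow> block_phase k \<beta> t \<noteq> block_phase k \<beta> s"
    and \<epsilon>: "\<epsilon> \<longlonglongrightarrow> 0" and lam: "lam \<longlonglongrightarrow> block_phase k \<beta> s"
    and eigen: "eventually (\<lambda>m. \<epsilon> m \<noteq> 0 \<and> F m \<in> carrier_vec n \<and>
                   (Dmat L k \<beta> * (1\<^sub>m n + \<epsilon> m \<cdot>\<^sub>m W)) *\<^sub>v F m = lam m \<cdot>\<^sub>v F m) sequentially"
    and g: "g \<in> carrier_vec n" "g \<noteq> 0\<^sub>v n"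
    and lim: "\<And>j. j < n \<Longrightarrow> (\<lambda>m. F m $ j) \<longlonglongrightarrow> g $ j"
  shows "\<exists>\<mu>. eigenvector (Dmat L k \<beta> * Wblockdiag L W) g \<mu>"
proof -
  define d where "d i = block_phase k \<beta> (blk L i)" for i
  have "eventually (\<lambda>m. F m \<in> carrier_vec n) sequentially"
    using eigen by (rule eventually_mono) simp
  then have WF: "(\<lambda>m. (W *\<^sub>v F m) $ i) \<longlonglongrightarrow> (W *\<^sub>v g) $ i" if "i < n" for i
    using tendsto_mult_mat_vec_nth[OF W that g(1) _ lim] by blast
  have coord: "eventually (\<lambda>m. \<epsilon> m \<noteq> 0 \<and>
      (\<forall>i<n. \<epsilon> m * d i * (W *\<^sub>v F m) $ i = (lam m - d i) * F m $ i)) sequentially"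
    using eigen
    by eventually_elim (use Dmat_perturbed_eigen_nth[OF L W] in \<open>auto simp: d_def\<close>)
  have supp: "g $ j = 0" if j: "j < n" "blk L j \<noteq> s" for j
  proof (rule perturbed_eigen_limit_vanishes[OF lim WF \<epsilon> lam])
    show "block_phase k \<beta> s \<noteq> d j"
      using phases[OF blk_less_length j(2)] j L unfolding d_def by metis
    show "eventually (\<lambda>m. \<epsilon> m * d j * (W *\<^sub>v F m) $ j = (lam m - d j) * F m $ j) sequentially"
      using coord by (rule eventually_mono) (use j in blast)
  qed (use j in auto)
  obtain i0 where i0: "i0 < n" "g $ i0 \<noteq> 0"
    using g by (metis carrier_vecD eq_vecI index_zero_vec)
  then have i0_block: "blk L i0 = s"
    using supp by blast
  have "(W *\<^sub>v g) $ i * g $ i0 = (W *\<^sub>v g) $ i0 * g $ i" if i: "i < n" "blk L i = s" for i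
  proof (rule perturbed_eigen_limit_proportional[OF lim lim WF WF])
    show "block_phase k \<beta> s \<noteq> 0"
      by (simp add: block_phase_def)
    show "eventually (\<lambda>m. \<epsilon> m \<noteq> 0
        \<and> \<epsilon> m * block_phase k \<beta> s * (W *\<^sub>v F m) $ i = (lam m - block_phase k \<beta> s) * F m $ i
        \<and> \<epsilon> m * block_phase k \<beta> s * (W *\<^sub>v F m) $ i0 = (lam m - block_phase k \<beta> s) * F m $ i0)
      sequentially"
      using coord by (rule eventually_mono) (use i i0 i0_block in \<open>auto simp: d_def\<close>)
  qed (use i i0 in auto)
  then have "(W *\<^sub>v g) $ i = ((W *\<^sub>v g) $ i0 / g $ i0) * g $ i" if "i < n" "blk L i = s" for i
    using that i0(2) by (simp add: field_simps)
  then show ?thesis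
    using eigenvector_Dmat_Wblockdiag_if_block_eigen[OF L W g supp] by blast
qed

theorem lemma3p6:
  fixes N :: nat and L :: "nat list" and Wd :: "real mat" and k :: int
    and \<beta> :: "nat \<Rightarrow> real" and f :: "real \<Rightarrow> complex vec" and lam :: "real \<Rightarrow> complex"
    and s :: nat and g :: "complex vec"
  assumes "1 \<le> N" and "1 \<le> length L" and "length L \<le> N"
    and "bandwidth_vec L N"
    and "admissible L N Wd"
    and "\<forall>s<length L. \<forall>t<length L. s \<noteq> t \<longrightarrow>
           cis (- 2 * pi * of_int k * \<beta> s) \<noteq> cis (- 2 * pi * of_int k * \<beta> t)"
    and "\<exists>\<epsilon>0>0. \<forall>\<epsilon>. 0 < \<epsilon> \<and> \<epsilon> < \<epsilon>0 \<longrightarrow>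
           f \<epsilon> \<in> carrier_vec N \<and> vnorm (f \<epsilon>) = 1 \<and>
           (Dmat L k \<beta> * (1\<^sub>m N + complex_of_real \<epsilon> \<cdot>\<^sub>m cmat Wd)) *\<^sub>v f \<epsilon> = lam \<epsilon> \<cdot>\<^sub>v f \<epsilon>"
    and "s < length L"
    and "(lam \<longlongrightarrow> cis (- 2 * pi * of_int k * \<beta> s)) (at_right 0)"
    and "accum_point_at0 N f g"
  shows "\<exists>\<mu>. eigenvector (Dmat L k \<beta> * Wblockdiag L (cmat Wd)) g \<mu>"
proof -
  have L: "sum_list L = N"
    using assms(4) by (simp add: bandwidth_vec_def)
  have W: "cmat Wd \<in> carrier_mat N N"
    using assms(5) by (auto simp: admissible_def cmat_def)
  obtain e :: "nat \<Rightarrow> real" where e: "\<And>m. 0 < e m" "e \<longlonglongrightarrow> 0" and g: "g \<in> carrier_vec N"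
    and lim: "\<And>i. i < N \<Longrightarrow> (\<lambda>m. f (e m) $ i) \<longlonglongrightarrow> g $ i"
    using assms(10) unfolding accum_point_at0_def by blast
  obtain \<epsilon>0 where "\<epsilon>0 > 0" and f: "\<And>\<epsilon>. 0 < \<epsilon> \<Longrightarrow> \<epsilon> < \<epsilon>0 \<Longrightarrow> f \<epsilon> \<in> carrier_vec N \<and> vnorm (f \<epsilon>) = 1 \<and>
      (Dmat L k \<beta> * (1\<^sub>m N + complex_of_real \<epsilon> \<cdot>\<^sub>m cmat Wd)) *\<^sub>v f \<epsilon> = lam \<epsilon> \<cdot>\<^sub>v f \<epsilon>"
    using assms(7) by blast
  have eventually_f: "eventually (\<lambda>m. complex_of_real (e m) \<noteq> 0 \<and> f (e m) \<in> carrier_vec N \<and>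
      vnorm (f (e m)) = 1 \<and>
      (Dmat L k \<beta> * (1\<^sub>m N + complex_of_real (e m) \<cdot>\<^sub>m cmat Wd)) *\<^sub>v f (e m) = lam (e m) \<cdot>\<^sub>v f (e m))
      sequentially"
    using order_tendstoD(2)[OF e(2) \<open>\<epsilon>0 > 0\<close>] by eventually_elim (use e f in force)
  have "g \<noteq> 0\<^sub>v N"
    using eventually_f
    by (intro limit_of_unit_vectors_nonzero[OF g sequentially_bot _ lim]) (auto elim: eventually_mono)
  moreover have "(\<lambda>m. lam (e m)) \<longlonglongrightarrow> block_phase k \<beta> s"
    using filterlim_compose[OF assms(9) tendsto_imp_filterlim_at_right[OF e(2)]] e(1)
    by (simp add: block_phase_def)
  moreover have "(\<lambda>m. complex_of_real (e m)) \<longlonglongrightarrow> 0"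
    using tendsto_of_real[OF e(2)] by simp
  ultimately show ?thesis
    using assms(6,8) eventually_f g lim
    by (intro perturbed_eigenvector_limit_is_block_eigenvector[OF L W])
      (auto simp: block_phase_def elim: eventually_mono)
qed

end
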